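(* Let $\gamma>0$, $n\in\mathbb{N}^*$, $\lambda_n=\lambda_{n,\gamma}$, $v_n$ the positive $L^2(-1,1)$-normalized first eigenfunction of $A_{n,\gamma}$, and $x_n=\big(\lambda_n/(n\pi)^2\big)^{1/(2\gamma)}$, assumed to satisfy $x_n\le1$. Then $|v_n'(x_n)|\le\sqrt{x_n}\,\lambda_n$.
   Context: $A_{n,\gamma}\varphi=-\varphi''+(n\pi)^2|x|^{2\gamma}\varphi$ with domain $H^2(-1,1)\cap H^1_0(-1,1)$; $\lambda_{n,\gamma}$ is its smallest eigenvalue and $v_n>0$ solves $-v_n''+[(n\pi)^2|x|^{2\gamma}-\lambda_n]v_n=0$ on $(-1,1)$, $v_n(\pm1)=0$, $\|v_n\|_{L^2(-1,1)}=1$. *)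

theory Defs
  imports "HOL-Analysis.Analysis"
begin

definition pot :: "nat \<Rightarrow> real \<Rightarrow> real \<Rightarrow> real" where
  "pot n \<gamma> x = (real n * pi)^2 * \<bar>x\<bar> powr (2 * \<gamma>)"

definition in_dom :: "(real \<Rightarrow> real) \<Rightarrow> bool" where
  "in_dom w \<longleftrightarrow> (\<exists>w' w''.
     (\<forall>x\<in>{-1..1}. (w has_real_derivative w' x) (at x within {-1..1}) \<and>
                   (w' has_real_derivative w'' x) (at x within {-1..1})) \<and>
     continuous_on {-1..1} w'' \<and> w (-1) = 0 \<and> w 1 = 0)"

definition is_eigenpair :: "nat \<Rightarrow> real \<Rightarrow> real \<Rightarrow> (real \<Rightarrow> real) \<Rightarrow> bool" where
  "is_eigenpair n \<gamma> \<mu> w \<longleftrightarrow> in_dom w \<and> (\<exists>x\<in>{-1..1}. w x \<noteq> 0) \<and>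
     (\<exists>w' w''. (\<forall>x\<in>{-1..1}. (w has_real_derivative w' x) (at x within {-1..1}) \<and>
                   (w' has_real_derivative w'' x) (at x within {-1..1}) \<and>
                   - w'' x + pot n \<gamma> x * w x = \<mu> * w x))"

definition is_eigenvalue :: "nat \<Rightarrow> real \<Rightarrow> real \<Rightarrow> bool" where
  "is_eigenvalue n \<gamma> \<mu> \<longleftrightarrow> (\<exists>w. is_eigenpair n \<gamma> \<mu> w)"

end

theory Submission
  imports Defs
begin

text \<open>The potential is even, so the Wronskian of v(x) and v(-x) is constant; comparing its
  values at 1 and 0 gives v'(0) = 0, and convexity of v on [0,1] then rules out lambda <= 0.
  On [0, x_n] the potential stays below lambda, hence |v''| <= lambda v there, and
  v'(x_n), the integral of v'' over [0, x_n], is at most lambda times the integral of v,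
  which Cauchy-Schwarz bounds by sqrt x_n times the L2 norm 1 of v.\<close>

lemma DERIV_within_interval_mvt:
  fixes f f' :: "real \<Rightarrow> real"
  assumes "p < q" "{p..q} \<subseteq> S"
    and "\<And>x. x \<in> {p..q} \<Longrightarrow> (f has_real_derivative f' x) (at x within S)"
  shows "\<exists>z\<in>{p<..<q}. f q - f p = f' z * (q - p)"
proof -
  have "(f has_derivative (\<lambda>h. f' x * h)) (at x within {p..q})" if "p \<le> x" "x \<le> q" for x
    using DERIV_subset[OF assms(3) assms(2)] that by (simp add: has_field_derivative_def)
  from mvt_simple[OF \<open>p < q\<close> this] show ?thesis by auto
qed

lemma Dirichlet_even_coeff_solution_deriv_origin:
  fixes f f' f'' q :: "real \<Rightarrow> real"
  assumes "r \<ge> 0"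
    and f': "\<And>x. x \<in> {-r..r} \<Longrightarrow> (f has_real_derivative f' x) (at x within {-r..r})"
    and f'': "\<And>x. x \<in> {-r..r} \<Longrightarrow> (f' has_real_derivative f'' x) (at x within {-r..r})"
    and ode: "\<And>x. x \<in> {-r..r} \<Longrightarrow> f'' x = q x * f x"
    and even: "\<And>x. q (-x) = q x"
    and "f (-r) = 0" "f r = 0"
  shows "f 0 * f' 0 = 0"
proof -
  let ?S = "{-r..r}"
  define W where "W x = - f x * f' (-x) - f' x * f (-x)" for x
  have "(W has_real_derivative 0) (at x within ?S)" if x: "x \<in> ?S" for x
  proof -
    have mx: "-x \<in> ?S" and refl: "uminus ` ?S = ?S" using x by auto
    have "(f \<circ> uminus has_real_derivative f' (-x) * (-1)) (at x within ?S)"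
         "(f' \<circ> uminus has_real_derivative f'' (-x) * (-1)) (at x within ?S)"
      by (rule DERIV_image_chain; use f' f'' mx refl in \<open>auto intro!: derivative_eq_intros\<close>)+
    then have "(W has_real_derivative
        - f' x * f' (-x) + f x * f'' (-x) - f'' x * f (-x) + f' x * f' (-x)) (at x within ?S)"
      unfolding W_def using f' f'' x by (auto simp: o_def intro!: derivative_eq_intros)
    moreover have "f x * f'' (-x) - f'' x * f (-x) = 0"
      using ode[OF x] ode[OF mx] even[of x] by simp
    ultimately show ?thesis by simp
  qed
  then obtain c where "\<forall>x\<in>?S. W x = c"
    using has_field_derivative_zero_constant[of ?S W] by auto
  then have "W 0 = W r" using \<open>r \<ge> 0\<close> by auto
  then show ?thesis unfolding W_def using assms(6,7) by simp
qed

lemma convex_nondecreasing_from_left: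
  fixes f f' f'' :: "real \<Rightarrow> real"
  assumes "a \<le> b" "{a..b} \<subseteq> S"
    and f': "\<And>x. x \<in> {a..b} \<Longrightarrow> (f has_real_derivative f' x) (at x within S)"
    and f'': "\<And>x. x \<in> {a..b} \<Longrightarrow> (f' has_real_derivative f'' x) (at x within S)"
    and f''_nonneg: "\<And>x. x \<in> {a..b} \<Longrightarrow> f'' x \<ge> 0"
    and "f' a \<ge> 0"
  shows "f a \<le> f b"
proof (cases "a = b")
  case False
  then obtain z where z: "z \<in> {a<..<b}" "f b - f a = f' z * (b - a)"
    using DERIV_within_interval_mvt[OF _ \<open>{a..b} \<subseteq> S\<close> f'] \<open>a \<le> b\<close> by force
  then obtain y where y: "y \<in> {a<..<z}" "f' z - f' a = f'' y * (z - a)"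
    using DERIV_within_interval_mvt[of a z S f' f''] assms(2) f'' by force
  have "f'' y * (z - a) \<ge> 0" using y z f''_nonneg[of y] by simp
  then have "f' z \<ge> 0" using y \<open>f' a \<ge> 0\<close> by simp
  then have "f' z * (b - a) \<ge> 0" using \<open>a \<le> b\<close> by simp
  then show ?thesis using z by simp
qed simp

lemma Dirichlet_solution_eigenvalue_pos:
  fixes f f' f'' q :: "real \<Rightarrow> real"
  assumes "{0..1} \<subseteq> S"
    and f': "\<And>x. x \<in> {0..1} \<Longrightarrow> (f has_real_derivative f' x) (at x within S)"
    and f'': "\<And>x. x \<in> {0..1} \<Longrightarrow> (f' has_real_derivative f'' x) (at x within S)"
    and ode: "\<And>x. x \<in> {0..1} \<Longrightarrow> f'' x = (q x - lam) * f x"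
    and "\<And>x. x \<in> {0..1} \<Longrightarrow> q x \<ge> 0" "\<And>x. x \<in> {0..1} \<Longrightarrow> f x \<ge> 0"
    and "f' 0 = 0" "f 0 > 0" "f 1 = 0"
  shows "lam > 0"
proof (rule ccontr)
  assume "\<not> lam > 0"
  have "f 0 \<le> f 1"
  proof (rule convex_nondecreasing_from_left[OF _ assms(1) f' f''])
    fix x assume "x \<in> {0..1::real}"
    then show "f'' x \<ge> 0"
      using ode[of x] assms(5,6)[of x] \<open>\<not> lam > 0\<close> by simp
  qed (use \<open>f' 0 = 0\<close> in auto)
  then show False using \<open>f 0 > 0\<close> \<open>f 1 = 0\<close> by simp
qed

lemma abs_diff_le_integral_of_deriv_bound:
  fixes f f' g :: "real \<Rightarrow> real"
  assumes "a \<le> b" "{a..b} \<subseteq> S"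
    and f': "\<And>x. x \<in> {a..b} \<Longrightarrow> (f has_real_derivative f' x) (at x within S)"
    and bound: "\<And>x. x \<in> {a..b} \<Longrightarrow> \<bar>f' x\<bar> \<le> g x"
    and "g integrable_on {a..b}"
  shows "\<bar>f b - f a\<bar> \<le> integral {a..b} g"
proof -
  have "(f' has_integral f b - f a) {a..b}"
  proof (rule fundamental_theorem_of_calculus[OF \<open>a \<le> b\<close>])
    fix x assume "x \<in> {a..b}"
    with DERIV_subset[OF f' assms(2)] show "(f has_vector_derivative f' x) (at x within {a..b})"
      by (simp add: has_real_derivative_iff_has_vector_derivative)
  qed
  moreover from this have "norm (integral {a..b} f') \<le> integral {a..b} g"
    using assms(5) bound by (intro integral_norm_bound_integral) auto
  ultimately show ?thesis by (simp add: integral_unique)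
qed

lemma integral_abs_le_sqrt_length:
  fixes u :: "real \<Rightarrow> real"
  assumes "a \<le> b" "continuous_on {a..b} u" "integral {a..b} (\<lambda>x. (u x)^2) \<le> 1"
  shows "integral {a..b} (\<lambda>x. \<bar>u x\<bar>) \<le> sqrt (b - a)"
proof (cases "a = b")
  case False
  define s where "s = sqrt (b - a)"
  have "s > 0" "s * s = b - a" using assms(1) False by (auto simp: s_def)
  have u2: "(\<lambda>x. (u x)^2) integrable_on {a..b}"
    and "(\<lambda>x. \<bar>u x\<bar>) integrable_on {a..b}"
    and majorant: "(\<lambda>x. s / 2 * (u x)^2 + 1 / (2 * s)) integrable_on {a..b}"
    using assms(2) by (auto intro!: integrable_continuous_interval continuous_intros)
  \<comment> \<open>AM-GM with the weight s chosen so that both terms contribute s/2\<close>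
  have "\<bar>u x\<bar> \<le> s / 2 * (u x)^2 + 1 / (2 * s)" for x
  proof -
    have "0 \<le> (s * \<bar>u x\<bar> - 1)^2" by simp
    then show ?thesis using \<open>s > 0\<close> by (simp add: field_simps power2_eq_square)
  qed
  then have "integral {a..b} (\<lambda>x. \<bar>u x\<bar>)
      \<le> integral {a..b} (\<lambda>x. s / 2 * (u x)^2 + 1 / (2 * s))"
    using u2 \<open>(\<lambda>x. \<bar>u x\<bar>) integrable_on {a..b}\<close> majorant by (intro integral_le) auto
  also have "\<dots> = s / 2 * integral {a..b} (\<lambda>x. (u x)^2) + (b - a) / (2 * s)"
    using has_integral_add[OF has_integral_mult_right[OF integrable_integral[OF u2], of "s / 2"]
        has_integral_const_real[of "1 / (2 * s)" a b]] assms(1)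
    by (simp add: integral_unique mult.commute)
  also have "\<dots> \<le> s / 2 + (b - a) / (2 * s)"
    using assms(3) \<open>s > 0\<close> by simp
  also have "\<dots> = s"
    using \<open>s > 0\<close> \<open>s * s = b - a\<close>[symmetric] by (simp add: field_simps)
  finally show ?thesis by (simp add: s_def)
qed simp

lemma pot_nonneg: "pot n \<gamma> x \<ge> 0"
  by (simp add: pot_def)

lemma pot_le_below_turning_point:
  assumes "\<gamma> > 0" "n \<ge> 1" "lam \<ge> 0"
    and "0 \<le> x" "x \<le> (lam / (real n * pi)^2) powr (1 / (2 * \<gamma>))"
  shows "pot n \<gamma> x \<le> lam"
proof -
  define K where "K = (real n * pi)^2"
  have "K > 0" using assms(2) by (simp add: K_def)
  have "x powr (2 * \<gamma>) \<le> ((lam / K) powr (1 / (2 * \<gamma>))) powr (2 * \<gamma>)"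
    using assms by (intro powr_mono2) (auto simp: K_def)
  also have "\<dots> = lam / K"
    using assms \<open>K > 0\<close> by (simp add: powr_powr)
  finally have "x powr (2 * \<gamma>) \<le> lam / K" .
  moreover have "pot n \<gamma> x = K * x powr (2 * \<gamma>)"
    using assms(4) by (simp add: pot_def K_def)
  ultimately show ?thesis
    using \<open>K > 0\<close> by (simp add: field_simps)
qed

theorem mainTheorem8:
  fixes \<gamma> lam :: real and n :: nat and v v' v'' :: "real \<Rightarrow> real"
  assumes "\<gamma> > 0" and "n \<ge> 1"
    and "is_eigenvalue n \<gamma> lam"
    and "\<forall>\<mu>. is_eigenvalue n \<gamma> \<mu> \<longrightarrow> lam \<le> \<mu>"
    and "\<forall>x\<in>{-1..1}. (v has_real_derivative v' x) (at x within {-1..1})"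
    and "\<forall>x\<in>{-1..1}. (v' has_real_derivative v'' x) (at x within {-1..1})"
    and "continuous_on {-1..1} v''"
    and "\<forall>x\<in>{-1..1}. - v'' x + (pot n \<gamma> x - lam) * v x = 0"
    and "v (-1) = 0" and "v 1 = 0"
    and "\<forall>x\<in>{-1<..<1}. v x > 0"
    and "integral {-1..1} (\<lambda>x. (v x)^2) = 1"
    and "(lam / (real n * pi)^2) powr (1 / (2 * \<gamma>)) \<le> 1"
  shows "\<bar>v' ((lam / (real n * pi)^2) powr (1 / (2 * \<gamma>)))\<bar>
           \<le> sqrt ((lam / (real n * pi)^2) powr (1 / (2 * \<gamma>))) * lam"
proof -
  let ?S = "{-1..1::real}" and ?x = "(lam / (real n * pi)^2) powr (1 / (2 * \<gamma>))"
  note v' = assms(5)[rule_format] and v'' = assms(6)[rule_format]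
  have ode: "v'' x = (pot n \<gamma> x - lam) * v x" if "x \<in> ?S" for x
    using assms(8) that by auto
  have v_nonneg: "v x \<ge> 0" if "x \<in> ?S" for x
    using that assms(9-11) by (cases "x = -1 \<or> x = 1") (auto simp: less_le)
  have "v 0 > 0" using assms(11) by auto
  moreover have "v 0 * v' 0 = 0"
    by (rule Dirichlet_even_coeff_solution_deriv_origin[where r = 1 and q = "\<lambda>x. pot n \<gamma> x - lam"])
      (use v' v'' ode assms(9,10) in \<open>auto simp: pot_def\<close>)
  ultimately have "v' 0 = 0" by simp
  have "lam > 0"
    using Dirichlet_solution_eigenvalue_pos[of "{-1..1}" v v' v'' "pot n \<gamma>" lam]
      v' v'' ode v_nonneg pot_nonneg \<open>v' 0 = 0\<close> \<open>v 0 > 0\<close> assms(10) by auto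
  have x: "0 \<le> ?x" "{0..?x} \<subseteq> ?S" using assms(13) by auto
  have "continuous_on ?S v" using DERIV_continuous_on[OF v'] .
  then have v_cont: "continuous_on {0..?x} v" and v2_int: "(\<lambda>x. (v x)^2) integrable_on ?S"
    using continuous_on_subset[OF _ x(2)]
    by (auto intro!: integrable_continuous_interval continuous_intros)
  have "\<bar>v' ?x - v' 0\<bar> \<le> integral {0..?x} (\<lambda>x. lam * \<bar>v x\<bar>)"
  proof (rule abs_diff_le_integral_of_deriv_bound[OF x v''])
    fix x assume "x \<in> {0..?x}"
    then have "0 \<le> pot n \<gamma> x" "pot n \<gamma> x \<le> lam" "x \<in> ?S"
      using pot_nonneg pot_le_below_turning_point[OF assms(1,2)] \<open>lam > 0\<close> x by auto
    then show "\<bar>v'' x\<bar> \<le> lam * \<bar>v x\<bar>"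
      using ode by (simp add: abs_mult mult_right_mono)
  qed (use x v_cont in \<open>auto intro!: integrable_continuous_interval continuous_intros\<close>)
  also have "\<dots> = lam * integral {0..?x} (\<lambda>x. \<bar>v x\<bar>)"
    by simp
  also have "\<dots> \<le> lam * sqrt ?x"
  proof -
    have "integral {0..?x} (\<lambda>x. (v x)^2) \<le> integral ?S (\<lambda>x. (v x)^2)"
      using x(2) v2_int v_cont
      by (intro integral_subset_le) (auto intro!: integrable_continuous_interval continuous_intros)
    then have "integral {0..?x} (\<lambda>x. \<bar>v x\<bar>) \<le> sqrt (?x - 0)"
      using assms(12) x(1) v_cont by (intro integral_abs_le_sqrt_length) auto
    then show ?thesis using \<open>lam > 0\<close> by simp
  qed
  finally show ?thesis using \<open>v' 0 = 0\<close> by (simp add: mult.commute)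
qed

end
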